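(* Let $k\in\mathbb{N}$. The set $$\mathcal{P}=\Big\{\sum_{i=1}^N a_i p_{v_i}: N\in\mathbb{N},\ a_i\in\mathbb{C},\ v_i\in T\Big\}$$ is dense in $\mathcal{L}^{(k)}_0$ with respect to the norm $\|\cdot\|_k$. In fact, $\mathcal{L}^{(k)}_0$ is a closed separable subspace of $\mathcal{L}^{(k)}$.
   Context: $T$ is a tree (locally finite, connected, simply connected graph, identified with its vertex set) without terminal vertices, rooted at $o$. $|v|$ is the distance from $o$ to $v$; for $v\ne o$, $v^-$ is the parent of $v$. $T^*=T\setminus\{o\}$, $Df(v)=|f(v)-f(v^-)|$. For $x\ge1$: $\ell_0(x)=1$, $\ell_1(x)=1+\ln x$, $\ell_j(x)=1+\ln\ell_{j-1}(x)$ for $j\ge2$. $\mathcal{L}^{(k)}$ is the space of $f:T\to\mathbb{C}$ with $\sup_{v\in T^*}|v|\prod_{j=0}^{k-1}\ell_j(|v|)Df(v)<\infty$, normed by $\|f\|_k=|f(o)|+\sup_{v\in T^*}|v|\prod_{j=0}^{k-1}\ell_j(|v|)Df(v)$; $\mathcal{L}^{(k)}_0$ is its subspace of $f$ with $\lim_{|v|\to\infty}|v|\prod_{j=0}^{k-1}\ell_j(|v|)Df(v)=0$. For $v\in T$, $S_v$ is the sector consisting of $v$ and all its descendants (vertices $w$ such that $v$ lies on the path from $o$ to $w$), and $p_v=\chi_{S_v}$ is its characteristic function. *)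

theory Defs
  imports "HOL-Analysis.Analysis"
begin

text \<open>A rooted tree is represented on the vertex type 'v by a parent map par and
a root r: par r = r, and every vertex reaches the root by iterating par
(this gives connectedness and absence of cycles).\<close>

definition rooted_tree :: "('v \<Rightarrow> 'v) \<Rightarrow> 'v \<Rightarrow> bool" where
  "rooted_tree par r \<longleftrightarrow> par r = r \<and> (\<forall>v. \<exists>n. (par ^^ n) v = r)"

definition children :: "('v \<Rightarrow> 'v) \<Rightarrow> 'v \<Rightarrow> 'v \<Rightarrow> 'v set" where
  "children par r v = {w. w \<noteq> r \<and> par w = v}"

text \<open>Locally finite and without terminal vertices (every vertex has degree at least 2;
the degree of v is the number of children plus one if v is not the root).\<close>
definition good_tree :: "('v \<Rightarrow> 'v) \<Rightarrow> 'v \<Rightarrow> bool" where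
  "good_tree par r \<longleftrightarrow> rooted_tree par r
     \<and> (\<forall>v. finite (children par r v))
     \<and> (\<forall>v. card (children par r v) + (if v = r then 0 else 1) \<ge> 2)"

definition vlen :: "('v \<Rightarrow> 'v) \<Rightarrow> 'v \<Rightarrow> 'v \<Rightarrow> nat" where
  "vlen par r v = (LEAST n. (par ^^ n) v = r)"

fun ell :: "nat \<Rightarrow> real \<Rightarrow> real" where
  "ell 0 x = 1"
| "ell (Suc 0) x = 1 + ln x"
| "ell (Suc (Suc j)) x = 1 + ln (ell (Suc j) x)"

definition wt :: "nat \<Rightarrow> nat \<Rightarrow> real" where
  "wt k n = real n * (\<Prod>j<k. ell j (real n))"

definition Dif :: "('v \<Rightarrow> 'v) \<Rightarrow> ('v \<Rightarrow> complex) \<Rightarrow> 'v \<Rightarrow> real" where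
  "Dif par f v = cmod (f v - f (par v))"

definition Lk :: "('v \<Rightarrow> 'v) \<Rightarrow> 'v \<Rightarrow> nat \<Rightarrow> ('v \<Rightarrow> complex) set" where
  "Lk par r k = {f. bdd_above ((\<lambda>v. wt k (vlen par r v) * Dif par f v) ` {v. v \<noteq> r})}"

definition Lk0 :: "('v \<Rightarrow> 'v) \<Rightarrow> 'v \<Rightarrow> nat \<Rightarrow> ('v \<Rightarrow> complex) set" where
  "Lk0 par r k = {f \<in> Lk par r k. \<forall>\<epsilon>>0. \<exists>M. \<forall>v. v \<noteq> r \<longrightarrow> vlen par r v \<ge> M \<longrightarrow>
        wt k (vlen par r v) * Dif par f v < \<epsilon>}"

definition normk :: "('v \<Rightarrow> 'v) \<Rightarrow> 'v \<Rightarrow> nat \<Rightarrow> ('v \<Rightarrow> complex) \<Rightarrow> real" where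
  "normk par r k f = cmod (f r) + (SUP v\<in>{v. v \<noteq> r}. wt k (vlen par r v) * Dif par f v)"

text \<open>Characteristic function of the sector S_v: w is in S_v iff v is on the path from r to w.\<close>
definition pv :: "('v \<Rightarrow> 'v) \<Rightarrow> 'v \<Rightarrow> 'v \<Rightarrow> complex" where
  "pv par v w = (if \<exists>n. (par ^^ n) w = v then 1 else 0)"

definition Pset :: "('v \<Rightarrow> 'v) \<Rightarrow> ('v \<Rightarrow> complex) set" where
  "Pset par = {g. \<exists>(N::nat) (a::nat \<Rightarrow> complex) vs. g = (\<lambda>w. \<Sum>i<N. a i * pv par (vs i) w)}"

end

theory Submission imports Defs begin

text \<open>Because \<open>p\<^sub>u(w) - p\<^sub>u(w\<^sup>-)\<close> is 1 for \<open>w = u\<close> and 0 otherwise, every \<open>f\<close> is the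
telescoping series \<open>f(o) p\<^sub>o + \<Sum>\<close> over \<open>u \<noteq> o\<close> of \<open>(f(u) - f(u\<^sup>-)) p\<^sub>u\<close>. Truncating it to the
finite ball \<open>|u| \<le> M\<close> and moving its coefficients into a countable dense subset of \<open>\<complex>\<close>
changes \<open>Df\<close> only a little inside the ball and not at all outside it, where the weighted \<open>Df\<close>
of a function in \<open>Lk0\<close> is small once \<open>M\<close> is large. Local finiteness makes the tree countable,
so the truncated series with such coefficients form a countable set.\<close>

lemma funpow_fixpoint: "f x = x \<Longrightarrow> (f ^^ n) x = x"
  by (induction n) auto

lemma good_tree_rooted_tree: "good_tree par r \<Longrightarrow> rooted_tree par r"
  unfolding good_tree_def by simp

lemma funpow_reaches_root_mono:
  assumes "rooted_tree par r" "(par ^^ m) v = r" "m \<le> n"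
  shows "(par ^^ n) v = r"
proof -
  have "(par ^^ n) v = (par ^^ (n - m)) ((par ^^ m) v)"
    using \<open>m \<le> n\<close> by (metis comp_apply funpow_add le_add_diff_inverse2)
  then show ?thesis
    using assms funpow_fixpoint unfolding rooted_tree_def by metis
qed

lemma rooted_tree_acyclic:
  assumes rt: "rooted_tree par r" and "v \<noteq> r"
  shows "(par ^^ Suc n) v \<noteq> v"
proof
  assume cycle: "(par ^^ Suc n) v = v"
  obtain m where m: "(par ^^ m) v = r"
    using rt unfolding rooted_tree_def by blast
  have "(par ^^ (Suc n * m)) v = v"
    using funpow_fixpoint[of "par ^^ Suc n" v m, OF cycle] by (metis funpow_mult)
  moreover have "(par ^^ (Suc n * m)) v = r"
    using funpow_reaches_root_mono[OF rt m] by simp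
  ultimately show False
    using \<open>v \<noteq> r\<close> by simp
qed

lemma vlen_le_iff:
  assumes rt: "rooted_tree par r"
  shows "vlen par r v \<le> n \<longleftrightarrow> (par ^^ n) v = r"
proof
  obtain m where "(par ^^ m) v = r"
    using rt unfolding rooted_tree_def by blast
  then have "(par ^^ vlen par r v) v = r"
    unfolding vlen_def by (rule LeastI)
  then show "vlen par r v \<le> n \<Longrightarrow> (par ^^ n) v = r"
    using funpow_reaches_root_mono[OF rt] by blast
next
  show "(par ^^ n) v = r \<Longrightarrow> vlen par r v \<le> n"
    unfolding vlen_def by (rule Least_le)
qed

lemma finite_ball:
  assumes gt: "good_tree par r"
  shows "finite {u. (par ^^ n) u = r}"
proof (induction n)
  case 0
  then show ?case by simp
next
  case (Suc n)
  have "{u. (par ^^ Suc n) u = r} \<subseteq> insert r (\<Union>p\<in>{u. (par ^^ n) u = r}. children par r p)"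
    unfolding children_def by (auto simp: funpow_swap1)
  moreover have "finite (children par r p)" for p
    using gt unfolding good_tree_def by blast
  ultimately show ?case
    using Suc by (meson finite.insertI finite_UN_I finite_subset)
qed

lemma countable_vertices:
  fixes par :: "'v \<Rightarrow> 'v"
  assumes gt: "good_tree par r"
  shows "countable (UNIV :: 'v set)"
proof -
  have "(UNIV :: 'v set) = (\<Union>n. {u. (par ^^ n) u = r})"
    using gt unfolding good_tree_def rooted_tree_def by blast
  moreover have "countable (\<Union>n. {u. (par ^^ n) u = r})"
    using finite_ball[OF gt] by (intro countable_UN) (auto intro: countable_finite)
  ultimately show ?thesis
    by simp
qed

lemma good_tree_nonroot_exists:
  assumes "good_tree par r"
  shows "\<exists>v. v \<noteq> r"
proof -
  have "2 \<le> card (children par r r) + (if r = r then 0 else 1)"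
    using assms unfolding good_tree_def by blast
  then have "children par r r \<noteq> {}"
    by auto
  then show ?thesis
    unfolding children_def by blast
qed

lemma pv_root:
  assumes "rooted_tree par r"
  shows "pv par u r = (if u = r then 1 else 0)"
  using assms funpow_fixpoint[of par r] unfolding pv_def rooted_tree_def
  by (auto intro: exI[of _ 0])

lemma pv_minus_pv_parent:
  assumes rt: "rooted_tree par r" and "w \<noteq> r"
  shows "pv par u w - pv par u (par w) = (if u = w then 1 else 0)"
proof -
  have in_sector_iff: "(\<exists>n. (par ^^ n) w = u) \<longleftrightarrow> u = w \<or> (\<exists>n. (par ^^ n) (par w) = u)"
    by (metis comp_apply funpow_0 funpow_Suc_right not0_implies_Suc)
  have "\<not> (\<exists>n. (par ^^ n) (par w) = w)"
    using rooted_tree_acyclic[OF rt \<open>w \<noteq> r\<close>] by (metis comp_apply funpow_Suc_right)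
  then show ?thesis
    unfolding pv_def using in_sector_iff by auto
qed

lemma sector_sum_root:
  assumes "rooted_tree par r" "finite A"
  shows "(\<Sum>u\<in>A. c u * pv par u r) = (if r \<in> A then c r else 0)"
  using assms by (simp add: pv_root if_distrib cong: if_cong)

lemma sector_sum_minus_parent:
  assumes "rooted_tree par r" "finite A" "w \<noteq> r"
  shows "(\<Sum>u\<in>A. c u * pv par u w) - (\<Sum>u\<in>A. c u * pv par u (par w)) = (if w \<in> A then c w else 0)"
proof -
  have "(\<Sum>u\<in>A. c u * pv par u w) - (\<Sum>u\<in>A. c u * pv par u (par w))
      = (\<Sum>u\<in>A. c u * (pv par u w - pv par u (par w)))"
    by (simp add: sum_subtractf right_diff_distrib)
  also have "\<dots> = (\<Sum>u\<in>A. if u = w then c u else 0)"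
    using pv_minus_pv_parent[OF assms(1,3)] by (intro sum.cong) auto
  finally show ?thesis
    using \<open>finite A\<close> by simp
qed

lemma ell_ge_1: "1 \<le> x \<Longrightarrow> 1 \<le> ell j x"
  by (induction j x rule: ell.induct) auto

lemma wt_nonneg: "0 \<le> wt k n"
proof (cases "n = 0")
  case False
  then have "0 \<le> ell j (real n)" for j
    using ell_ge_1[of "real n" j] by simp
  then show ?thesis
    unfolding wt_def by (simp add: prod_nonneg)
qed (simp add: wt_def)

abbreviation wDif :: "('v \<Rightarrow> 'v) \<Rightarrow> 'v \<Rightarrow> nat \<Rightarrow> ('v \<Rightarrow> complex) \<Rightarrow> 'v \<Rightarrow> real" where
  "wDif par r k f v \<equiv> wt k (vlen par r v) * Dif par f v"

lemma wDif_nonneg: "0 \<le> wDif par r k f v"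
  unfolding Dif_def by (simp add: wt_nonneg)

lemma wDif_add_le: "wDif par r k (\<lambda>w. f w + g w) v \<le> wDif par r k f v + wDif par r k g v"
proof -
  have "Dif par (\<lambda>w. f w + g w) v \<le> Dif par f v + Dif par g v"
    unfolding Dif_def by (metis add_diff_add norm_triangle_ineq)
  then show ?thesis
    using wt_nonneg by (metis distrib_left mult_left_mono)
qed

lemma wDif_scale: "wDif par r k (\<lambda>w. c * f w) v = cmod c * wDif par r k f v"
  unfolding Dif_def by (simp add: norm_mult flip: right_diff_distrib)

lemma Lk_iff: "f \<in> Lk par r k \<longleftrightarrow> (\<exists>B. \<forall>v. v \<noteq> r \<longrightarrow> wDif par r k f v \<le> B)"
  unfolding Lk_def bdd_above_def by auto

lemma Lk_add:
  assumes "f \<in> Lk par r k" "g \<in> Lk par r k"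
  shows "(\<lambda>w. f w + g w) \<in> Lk par r k"
proof -
  obtain B C where "\<And>v. v \<noteq> r \<Longrightarrow> wDif par r k f v \<le> B" "\<And>v. v \<noteq> r \<Longrightarrow> wDif par r k g v \<le> C"
    using assms unfolding Lk_iff by blast
  then have "wDif par r k (\<lambda>w. f w + g w) v \<le> B + C" if "v \<noteq> r" for v
    using wDif_add_le[where f = f and g = g and v = v] that by (meson add_mono order_trans)
  then show ?thesis
    unfolding Lk_iff by blast
qed

lemma Lk_scale:
  assumes "f \<in> Lk par r k"
  shows "(\<lambda>w. c * f w) \<in> Lk par r k"
proof -
  obtain B where "\<And>v. v \<noteq> r \<Longrightarrow> wDif par r k f v \<le> B"
    using assms unfolding Lk_iff by blast
  then have "wDif par r k (\<lambda>w. c * f w) v \<le> cmod c * B" if "v \<noteq> r" for v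
    unfolding wDif_scale using that by (simp add: mult_left_mono)
  then show ?thesis
    unfolding Lk_iff by blast
qed

lemma Lk_diff:
  assumes "f \<in> Lk par r k" "g \<in> Lk par r k"
  shows "(\<lambda>w. f w - g w) \<in> Lk par r k"
  using Lk_add[OF assms(1) Lk_scale[OF assms(2), of "-1"]] by simp

lemma wDif_le_normk:
  assumes "f \<in> Lk par r k" "v \<noteq> r"
  shows "wDif par r k f v \<le> normk par r k f"
proof -
  have "wDif par r k f v \<le> (SUP v\<in>{v. v \<noteq> r}. wDif par r k f v)"
    using assms unfolding Lk_def by (intro cSUP_upper) auto
  then show ?thesis
    unfolding normk_def by (simp add: add_increasing)
qed

lemma normk_le:
  assumes "\<exists>v. v \<noteq> r" "cmod (f r) \<le> a" "\<And>v. v \<noteq> r \<Longrightarrow> wDif par r k f v \<le> b"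
  shows "normk par r k f \<le> a + b"
  unfolding normk_def using assms by (intro add_mono cSUP_least) auto

definition at_boundary :: "('v \<Rightarrow> 'v) \<Rightarrow> 'v \<Rightarrow> 'v filter" where
  "at_boundary par r = inf (filtercomap (vlen par r) at_top) (principal {v. v \<noteq> r})"

lemma eventually_at_boundary:
  "eventually P (at_boundary par r) \<longleftrightarrow> (\<exists>M. \<forall>v. v \<noteq> r \<longrightarrow> M \<le> vlen par r v \<longrightarrow> P v)"
  unfolding at_boundary_def eventually_inf_principal eventually_filtercomap_at_top_linorder
  by auto

lemma Lk0_iff_tendsto:
  "f \<in> Lk0 par r k \<longleftrightarrow> f \<in> Lk par r k \<and> (wDif par r k f \<longlongrightarrow> 0) (at_boundary par r)"
proof -
  have "(wDif par r k f \<longlongrightarrow> 0) (at_boundary par r)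
      \<longleftrightarrow> (\<forall>\<epsilon>>0. eventually (\<lambda>v. wDif par r k f v < \<epsilon>) (at_boundary par r))"
  proof -
    have "\<forall>l<0. eventually (\<lambda>v. l < wDif par r k f v) (at_boundary par r)"
      by (intro allI impI always_eventually) (meson less_le_trans wDif_nonneg)
    then show ?thesis
      unfolding order_tendsto_iff by simp
  qed
  then show ?thesis
    unfolding Lk0_def eventually_at_boundary by auto
qed

lemma Lk0_subset_Lk: "Lk0 par r k \<subseteq> Lk par r k"
  unfolding Lk0_def by blast

lemma Lk0_zero: "(\<lambda>w. 0) \<in> Lk0 par r k"
  unfolding Lk0_iff_tendsto Lk_iff Dif_def by (simp add: exI[of _ 0])

lemma Lk0_add:
  assumes "f \<in> Lk0 par r k" "g \<in> Lk0 par r k"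
  shows "(\<lambda>w. f w + g w) \<in> Lk0 par r k"
proof -
  have sum_tendsto: "((\<lambda>v. wDif par r k f v + wDif par r k g v) \<longlongrightarrow> 0) (at_boundary par r)"
    using assms unfolding Lk0_iff_tendsto by (intro tendsto_add_zero) auto
  have "(wDif par r k (\<lambda>w. f w + g w) \<longlongrightarrow> 0) (at_boundary par r)"
  proof (rule tendsto_sandwich[OF _ _ tendsto_const sum_tendsto])
    show "eventually (\<lambda>v. 0 \<le> wDif par r k (\<lambda>w. f w + g w) v) (at_boundary par r)"
      by (intro always_eventually allI wDif_nonneg)
    show "eventually (\<lambda>v. wDif par r k (\<lambda>w. f w + g w) v \<le> wDif par r k f v + wDif par r k g v)
        (at_boundary par r)"
      by (intro always_eventually allI wDif_add_le)
  qed
  moreover have "(\<lambda>w. f w + g w) \<in> Lk par r k"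
    using assms Lk0_subset_Lk[THEN subsetD] by (intro Lk_add)
  ultimately show ?thesis
    unfolding Lk0_iff_tendsto by blast
qed

lemma Lk0_scale:
  assumes "f \<in> Lk0 par r k"
  shows "(\<lambda>w. c * f w) \<in> Lk0 par r k"
  using assms unfolding Lk0_iff_tendsto wDif_scale by (auto intro: Lk_scale tendsto_mult_right_zero)

lemma Lk0_closed:
  assumes f: "f \<in> Lk par r k"
    and approx: "\<forall>\<epsilon>>0. \<exists>g\<in>Lk0 par r k. normk par r k (\<lambda>w. f w - g w) < \<epsilon>"
  shows "f \<in> Lk0 par r k"
  unfolding Lk0_def mem_Collect_eq
proof (intro conjI f allI impI)
  fix \<epsilon> :: real
  assume "\<epsilon> > 0"
  then have "\<epsilon> / 2 > 0"
    by simp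
  then obtain g where g: "g \<in> Lk0 par r k" "normk par r k (\<lambda>w. f w - g w) < \<epsilon> / 2"
    using approx by blast
  then obtain M where M: "\<And>v. v \<noteq> r \<Longrightarrow> M \<le> vlen par r v \<Longrightarrow> wDif par r k g v < \<epsilon> / 2"
    using \<open>\<epsilon> / 2 > 0\<close> unfolding Lk0_def by blast
  have "(\<lambda>w. f w - g w) \<in> Lk par r k"
    using f g(1) Lk0_subset_Lk[THEN subsetD] by (intro Lk_diff)
  have "wDif par r k f v < \<epsilon>" if "v \<noteq> r" "M \<le> vlen par r v" for v
  proof -
    have "wDif par r k f v \<le> wDif par r k (\<lambda>w. f w - g w) v + wDif par r k g v"
      using wDif_add_le[where f = "\<lambda>w. f w - g w" and g = g and v = v] by simp
    also have "\<dots> \<le> normk par r k (\<lambda>w. f w - g w) + wDif par r k g v"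
      using wDif_le_normk[OF \<open>(\<lambda>w. f w - g w) \<in> Lk par r k\<close> \<open>v \<noteq> r\<close>] by simp
    finally show ?thesis
      using g(2) M[OF that] by simp
  qed
  then show "\<exists>M. \<forall>v. v \<noteq> r \<longrightarrow> M \<le> vlen par r v \<longrightarrow> wDif par r k f v < \<epsilon>"
    by blast
qed

lemma pv_in_Lk0:
  assumes rt: "rooted_tree par r"
  shows "pv par u \<in> Lk0 par r k"
proof -
  have wDif_pv: "wDif par r k (pv par u) v = (if v = u then wt k (vlen par r u) else 0)"
    if "v \<noteq> r" for v
    using pv_minus_pv_parent[OF rt that, of u] unfolding Dif_def by auto
  then have "pv par u \<in> Lk par r k"
    unfolding Lk_iff by (metis order_refl wt_nonneg)
  moreover have "eventually (\<lambda>v. wDif par r k (pv par u) v = 0) (at_boundary par r)"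
    unfolding eventually_at_boundary using wDif_pv by (intro exI[of _ "Suc (vlen par r u)"]) auto
  ultimately show ?thesis
    unfolding Lk0_iff_tendsto by (simp add: tendsto_eventually)
qed

lemma Pset_subset_Lk0:
  assumes "rooted_tree par r"
  shows "Pset par \<subseteq> Lk0 par r k"
proof
  fix g
  assume "g \<in> Pset par"
  then obtain N :: nat and a vs where g: "g = (\<lambda>w. \<Sum>i<N. a i * pv par (vs i) w)"
    unfolding Pset_def by blast
  have "(\<lambda>w. \<Sum>i<n. a i * pv par (vs i) w) \<in> Lk0 par r k" for n
  proof (induction n)
    case 0
    show ?case using Lk0_zero by simp
  next
    case (Suc n)
    show ?case
      using Lk0_add[OF Suc Lk0_scale[OF pv_in_Lk0[OF assms]]] by simp
  qed
  then show "g \<in> Lk0 par r k"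
    using g by simp
qed

lemma Dif_minus_sector_sum:
  assumes "rooted_tree par r" "finite A" "w \<noteq> r"
  shows "Dif par (\<lambda>w. f w - (\<Sum>u\<in>A. c u * pv par u w)) w
       = (if w \<in> A then cmod (f w - f (par w) - c w) else Dif par f w)"
  using sector_sum_minus_parent[OF assms, of c] unfolding Dif_def
  by (auto simp: algebra_simps)

lemma wt_le_sum_atMost: "n \<le> M \<Longrightarrow> wt k n \<le> (\<Sum>m\<le>M. wt k m)"
  by (rule member_le_sum) (auto simp: wt_nonneg)

lemma normk_minus_sector_sum_le:
  assumes gt: "good_tree par r" and "finite A" "r \<in> A"
    and root: "cmod (f r - c r) \<le> a"
    and inside: "\<And>v. v \<in> A \<Longrightarrow> v \<noteq> r \<Longrightarrow> wt k (vlen par r v) * cmod (f v - f (par v) - c v) \<le> b"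
    and outside: "\<And>v. v \<notin> A \<Longrightarrow> v \<noteq> r \<Longrightarrow> wDif par r k f v \<le> b"
  shows "normk par r k (\<lambda>w. f w - (\<Sum>u\<in>A. c u * pv par u w)) \<le> a + b"
proof (rule normk_le[OF good_tree_nonroot_exists[OF gt]])
  have rt: "rooted_tree par r"
    using gt by (rule good_tree_rooted_tree)
  show "cmod (f r - (\<Sum>u\<in>A. c u * pv par u r)) \<le> a"
    using root sector_sum_root[OF rt \<open>finite A\<close>] \<open>r \<in> A\<close> by simp
  show "wDif par r k (\<lambda>w. f w - (\<Sum>u\<in>A. c u * pv par u w)) v \<le> b" if "v \<noteq> r" for v
    using Dif_minus_sector_sum[OF rt \<open>finite A\<close> that] inside[OF _ that] outside[OF _ that]
    by (cases "v \<in> A") auto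
qed

lemma sector_sum_approximation:
  assumes gt: "good_tree par r" and f: "f \<in> Lk0 par r k" and "\<epsilon> > 0"
    and dense: "\<And>z d. d > 0 \<Longrightarrow> \<exists>q\<in>D. cmod (z - q) < d"
  obtains A c where "finite A" "c ` A \<subseteq> D"
    "normk par r k (\<lambda>w. f w - (\<Sum>u\<in>A. c u * pv par u w)) < \<epsilon>"
proof -
  have rt: "rooted_tree par r"
    using gt by (rule good_tree_rooted_tree)
  have "\<epsilon> / 2 > 0"
    using \<open>\<epsilon> > 0\<close> by simp
  then obtain M where M: "\<And>v. v \<noteq> r \<Longrightarrow> M \<le> vlen par r v \<Longrightarrow> wDif par r k f v < \<epsilon> / 2"
    using f unfolding Lk0_def by blast
  define A where "A = {u. (par ^^ M) u = r}"
  define W where "W = 1 + (\<Sum>m\<le>M. wt k m)"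
  define d where "d = \<epsilon> / (4 * W)"
  have "W \<ge> 1"
    unfolding W_def by (simp add: sum_nonneg wt_nonneg)
  then have "d > 0" "W * d \<le> \<epsilon> / 2" "d < \<epsilon> / 2"
    using \<open>\<epsilon> > 0\<close> by (auto simp: d_def field_simps)
  define inc where "inc u = (if u = r then f r else f u - f (par u))" for u
  have "\<forall>u. \<exists>q. q \<in> D \<and> cmod (inc u - q) < d"
    using dense[OF \<open>d > 0\<close>] by blast
  then obtain c where c: "\<forall>u. c u \<in> D \<and> cmod (inc u - c u) < d"
    by metis
  then have c_in_D: "\<And>u. c u \<in> D" and c_close: "\<And>u. cmod (inc u - c u) < d"
    by auto
  have "normk par r k (\<lambda>w. f w - (\<Sum>u\<in>A. c u * pv par u w)) \<le> d + \<epsilon> / 2"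
  proof (rule normk_minus_sector_sum_le[OF gt])
    show "finite A"
      unfolding A_def by (rule finite_ball[OF gt])
    show "r \<in> A"
      using rt funpow_fixpoint[of par r M] unfolding A_def rooted_tree_def by simp
    show "cmod (f r - c r) \<le> d"
      using c_close[of r] unfolding inc_def by (simp add: less_imp_le)
    show "wt k (vlen par r v) * cmod (f v - f (par v) - c v) \<le> \<epsilon> / 2" if "v \<in> A" "v \<noteq> r" for v
    proof -
      have "vlen par r v \<le> M"
        using that(1) vlen_le_iff[OF rt] unfolding A_def by simp
      then have "wt k (vlen par r v) \<le> W"
        unfolding W_def using wt_le_sum_atMost[of "vlen par r v" M k] by simp
      moreover have "cmod (f v - f (par v) - c v) \<le> d"
        using c_close[of v] \<open>v \<noteq> r\<close> unfolding inc_def by (simp add: less_imp_le)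
      ultimately have "wt k (vlen par r v) * cmod (f v - f (par v) - c v) \<le> W * d"
        using \<open>W \<ge> 1\<close> by (intro mult_mono) (auto simp: wt_nonneg)
      then show ?thesis
        using \<open>W * d \<le> \<epsilon> / 2\<close> by linarith
    qed
    show "wDif par r k f v \<le> \<epsilon> / 2" if "v \<notin> A" "v \<noteq> r" for v
      using that M[of v] vlen_le_iff[OF rt, of v M] unfolding A_def by simp
  qed
  moreover have "c ` A \<subseteq> D"
    using c_in_D by blast
  ultimately show thesis
    using that[of A c] \<open>d < \<epsilon> / 2\<close> finite_ball[OF gt] unfolding A_def by simp
qed

definition sector_combination :: "('v \<Rightarrow> 'v) \<Rightarrow> (complex \<times> 'v) list \<Rightarrow> 'v \<Rightarrow> complex" where
  "sector_combination par xs w = (\<Sum>(a, u)\<leftarrow>xs. a * pv par u w)"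

lemma sector_combination_in_Pset: "sector_combination par xs \<in> Pset par"
proof -
  have "sector_combination par xs = (\<lambda>w. \<Sum>i<length xs. fst (xs ! i) * pv par (snd (xs ! i)) w)"
    unfolding sector_combination_def by (auto simp: sum_list_sum_nth atLeast0LessThan split_beta)
  then show ?thesis
    unfolding Pset_def
    by (intro CollectI exI[of _ "length xs"] exI[of _ "\<lambda>i. fst (xs ! i)"] exI[of _ "\<lambda>i. snd (xs ! i)"])
qed

lemma sector_sum_in_sector_combinations:
  assumes "finite A" "c ` A \<subseteq> D"
  shows "(\<lambda>w. \<Sum>u\<in>A. c u * pv par u w) \<in> sector_combination par ` lists (D \<times> UNIV)"
proof -
  obtain l where l: "set l = A" "distinct l"
    using finite_distinct_list[OF \<open>finite A\<close>] by blast
  have "(\<lambda>w. \<Sum>u\<in>A. c u * pv par u w) = sector_combination par (map (\<lambda>u. (c u, u)) l)"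
    unfolding sector_combination_def using l by (auto simp: sum.distinct_set_conv_list o_def)
  moreover have "map (\<lambda>u. (c u, u)) l \<in> lists (D \<times> UNIV)"
    using assms(2) l(1) by (auto simp: image_subset_iff)
  ultimately show ?thesis
    by blast
qed

lemma countable_dense_subset_of_Pset:
  assumes gt: "good_tree par r"
  obtains S where "countable S" "S \<subseteq> Pset par"
    "\<forall>f\<in>Lk0 par r k. \<forall>\<epsilon>>0. \<exists>g\<in>S. normk par r k (\<lambda>w. f w - g w) < \<epsilon>"
proof -
  obtain D :: "complex set" where "countable D" and D_dense: "\<And>z d. d > 0 \<Longrightarrow> \<exists>q\<in>D. cmod (z - q) < d"
    using countable_dense_exists[where 'a = complex]
    by (metis centre_in_ball dist_norm empty_iff mem_ball open_ball)
  let ?S = "sector_combination par ` lists (D \<times> UNIV)"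
  have "countable ?S"
    using \<open>countable D\<close> countable_vertices[OF gt] by simp
  moreover have "?S \<subseteq> Pset par"
    by (intro image_subsetI sector_combination_in_Pset)
  moreover have "\<forall>f\<in>Lk0 par r k. \<forall>\<epsilon>>0. \<exists>g\<in>?S. normk par r k (\<lambda>w. f w - g w) < \<epsilon>"
  proof (intro ballI allI impI)
    fix f and \<epsilon> :: real
    assume f: "f \<in> Lk0 par r k" and "\<epsilon> > 0"
    obtain A c where "finite A" "c ` A \<subseteq> D"
      and "normk par r k (\<lambda>w. f w - (\<Sum>u\<in>A. c u * pv par u w)) < \<epsilon>"
      using sector_sum_approximation[OF gt f \<open>\<epsilon> > 0\<close> D_dense] .
    moreover have "(\<lambda>w. \<Sum>u\<in>A. c u * pv par u w) \<in> ?S"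
      using \<open>finite A\<close> \<open>c ` A \<subseteq> D\<close> by (rule sector_sum_in_sector_combinations)
    ultimately show "\<exists>g\<in>?S. normk par r k (\<lambda>w. f w - g w) < \<epsilon>"
      by (intro bexI)
  qed
  ultimately show thesis
    by (rule that)
qed

theorem proposition2p10:
  fixes par :: "'v \<Rightarrow> 'v" and r :: 'v and k :: nat
  assumes "good_tree par r"
  shows "Pset par \<subseteq> Lk0 par r k
    \<and> (\<forall>f\<in>Lk0 par r k. \<forall>\<epsilon>>0. \<exists>g\<in>Pset par. normk par r k (\<lambda>w. f w - g w) < \<epsilon>)
    \<and> Lk0 par r k \<subseteq> Lk par r k
    \<and> (\<lambda>w. 0) \<in> Lk0 par r k
    \<and> (\<forall>f\<in>Lk0 par r k. \<forall>g\<in>Lk0 par r k. (\<lambda>w. f w + g w) \<in> Lk0 par r k)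
    \<and> (\<forall>c. \<forall>f\<in>Lk0 par r k. (\<lambda>w. c * f w) \<in> Lk0 par r k)
    \<and> (\<forall>f\<in>Lk par r k. (\<forall>\<epsilon>>0. \<exists>g\<in>Lk0 par r k. normk par r k (\<lambda>w. f w - g w) < \<epsilon>) \<longrightarrow> f \<in> Lk0 par r k)
    \<and> (\<exists>D. countable D \<and> D \<subseteq> Lk0 par r k \<and>
          (\<forall>f\<in>Lk0 par r k. \<forall>\<epsilon>>0. \<exists>g\<in>D. normk par r k (\<lambda>w. f w - g w) < \<epsilon>))"
proof -
  have P: "Pset par \<subseteq> Lk0 par r k"
    using Pset_subset_Lk0[OF good_tree_rooted_tree[OF assms]] .
  obtain S where "countable S" "S \<subseteq> Pset par"
    and S_dense: "\<forall>f\<in>Lk0 par r k. \<forall>\<epsilon>>0. \<exists>g\<in>S. normk par r k (\<lambda>w. f w - g w) < \<epsilon>"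
    using countable_dense_subset_of_Pset[OF assms] .
  have "\<forall>f\<in>Lk0 par r k. \<forall>\<epsilon>>0. \<exists>g\<in>Pset par. normk par r k (\<lambda>w. f w - g w) < \<epsilon>"
  proof (intro ballI allI impI)
    fix f and \<epsilon> :: real
    assume "f \<in> Lk0 par r k" "\<epsilon> > 0"
    then obtain g where "g \<in> S" "normk par r k (\<lambda>w. f w - g w) < \<epsilon>"
      using S_dense by blast
    then show "\<exists>g\<in>Pset par. normk par r k (\<lambda>w. f w - g w) < \<epsilon>"
      using \<open>S \<subseteq> Pset par\<close> by blast
  qed
  moreover have "\<exists>D. countable D \<and> D \<subseteq> Lk0 par r k \<and>
      (\<forall>f\<in>Lk0 par r k. \<forall>\<epsilon>>0. \<exists>g\<in>D. normk par r k (\<lambda>w. f w - g w) < \<epsilon>)"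
    by (intro exI[of _ S] conjI \<open>countable S\<close> S_dense order.trans[OF \<open>S \<subseteq> Pset par\<close> P])
  moreover have "\<forall>f\<in>Lk0 par r k. \<forall>g\<in>Lk0 par r k. (\<lambda>w. f w + g w) \<in> Lk0 par r k"
    by (intro ballI Lk0_add)
  moreover have "\<forall>c. \<forall>f\<in>Lk0 par r k. (\<lambda>w. c * f w) \<in> Lk0 par r k"
    by (intro allI ballI Lk0_scale)
  moreover have "\<forall>f\<in>Lk par r k. (\<forall>\<epsilon>>0. \<exists>g\<in>Lk0 par r k. normk par r k (\<lambda>w. f w - g w) < \<epsilon>)
      \<longrightarrow> f \<in> Lk0 par r k"
    by (intro ballI impI Lk0_closed)
  ultimately show ?thesis
    by (simp add: P Lk0_subset_Lk Lk0_zero)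
qed

end
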